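(* Let $c>0$. Then, as $r\to\infty$, $$\log\Big(\sum_{k=0}^\infty\frac{c^k}{k!}e^{-c}e^{-r/(k+1)}\Big)\sim-\sqrt{2r\log r},$$ i.e. the ratio of the two sides tends to $1$. *)

theory Defs
  imports "HOL-Analysis.Analysis" "HOL-Library.Landau_Symbols"
begin

end

theory Submission
  imports Defs "HOL-Real_Asymp.Real_Asymp"
begin

text \<open>
  With \<open>u = k + 1\<close>, Stirling's bounds give \<open>ln a\<^sub>k = -(u ln u + r/u) + O(u)\<close> for the \<open>k\<close>-th summand.
  The function \<open>u ln u + r/u\<close> is minimal near \<open>u = \<surd>(2r/ln r)\<close>, with minimum \<open>\<sim> \<surd>(2r ln r)\<close>,
  and the single term at that index already gives the lower bound.  For the upper bound, AM-GM
  bounds \<open>u ln u + r/u\<close> from below by \<open>2\<surd>(r ln y)\<close> with \<open>y = \<surd>r/ln r\<close> uniformly in \<open>u \<ge> 1\<close>, which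
  controls the terms with \<open>u \<le> 4\<surd>(2r/ln r)\<close>; the Poisson tail beyond is smaller still.
\<close>

definition poisson_damped_term :: "real \<Rightarrow> real \<Rightarrow> nat \<Rightarrow> real" where
  "poisson_damped_term c r k = c ^ k / fact k * exp (- c) * exp (- r / real (k + 1))"

lemma exp_sums_real: "(\<lambda>k. (x::real) ^ k / fact k) sums exp x"
  using exp_converges[of x] by (simp add: divide_inverse mult.commute)

lemma summable_exp_real: "summable (\<lambda>k. (x::real) ^ k / fact k)"
  using exp_sums_real sums_summable by blast

lemma power_div_fact_le_exp:
  assumes "x \<ge> 0"
  shows "(x::real) ^ n / fact n \<le> exp x"
proof -
  have "(\<Sum>k\<in>{n}. x ^ k / fact k) \<le> (\<Sum>k. x ^ k / fact k)"
    using assms by (intro sum_le_suminf summable_exp_real) auto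
  then show ?thesis
    using sums_unique[OF exp_sums_real[of x]] by simp
qed

lemma ln_fact_ge: "real n * ln (real n) - real n \<le> ln (fact n :: real)"
proof (cases "n = 0")
  case False
  then have "ln (real n ^ n / fact n) \<le> ln (exp (real n))"
    using power_div_fact_le_exp[of "real n" n] by (subst ln_le_cancel_iff) auto
  moreover have "ln (real n ^ n / fact n) = real n * ln (real n) - ln (fact n)"
    using False by (simp add: ln_div ln_realpow)
  ultimately show ?thesis by simp
qed simp

lemma ln_fact_le: "ln (fact n :: real) \<le> real n * ln (real n)"
proof (cases "n = 0")
  case False
  have "ln (fact n :: real) \<le> ln (real n ^ n)"
    using fact_le_power[of n, where 'a = real] by (subst ln_le_cancel_iff) auto
  then show ?thesis
    using False by (simp add: ln_realpow)
qed simp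

lemma ln_power_div_fact_le:
  assumes "c > 0"
  shows "ln (c ^ n / fact n) \<le> real n * (1 + \<bar>ln c\<bar>) - real n * ln (real n)"
proof -
  have "real n * ln c \<le> real n * \<bar>ln c\<bar>"
    by (intro mult_left_mono) auto
  moreover have "ln (c ^ n / fact n) = real n * ln c - ln (fact n)"
    using assms by (simp add: ln_div ln_realpow)
  ultimately show ?thesis
    using ln_fact_ge[of n] by (simp add: algebra_simps)
qed

lemma poisson_damped_term_pos: "c > 0 \<Longrightarrow> 0 < poisson_damped_term c r k"
  by (simp add: poisson_damped_term_def)

lemma ln_poisson_damped_term:
  assumes "c > 0"
  shows "ln (poisson_damped_term c r k) = real k * ln c - ln (fact k) - c - r / real (k + 1)"
  using assms by (simp add: poisson_damped_term_def ln_mult ln_div ln_realpow)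

lemma poisson_damped_term_le:
  assumes "c > 0" "r \<ge> 0"
  shows "poisson_damped_term c r k \<le> exp (- c) * (c ^ k / fact k)"
  using assms by (simp add: poisson_damped_term_def mult_le_cancel_left1 field_simps)

lemma summable_poisson_damped_term:
  assumes "c > 0" "r \<ge> 0"
  shows "summable (poisson_damped_term c r)"
proof (rule summable_comparison_test[of _ "\<lambda>k. exp (- c) * (c ^ k / fact k)"])
  show "\<exists>N. \<forall>k\<ge>N. norm (poisson_damped_term c r k) \<le> exp (- c) * (c ^ k / fact k)"
    using poisson_damped_term_pos[OF assms(1)] poisson_damped_term_le[OF assms]
    by (simp add: abs_of_pos)
qed (intro summable_mult summable_exp_real)

lemma suminf_poisson_damped_term_pos:
  assumes "c > 0" "r \<ge> 0"
  shows "0 < (\<Sum>k. poisson_damped_term c r k)"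
  using assms by (intro suminf_pos summable_poisson_damped_term poisson_damped_term_pos)

lemma suminf_poisson_damped_tail_le:
  assumes "c > 0" "r \<ge> 0"
  shows "(\<Sum>j. poisson_damped_term c r (j + m)) \<le> c ^ m / fact m"
proof -
  have term_le: "poisson_damped_term c r (j + m) \<le> exp (- c) * (c ^ m / fact m) * (c ^ j / fact j)"
    for j
  proof -
    have "fact j * fact m \<le> (fact (j + m) :: nat)"
      by (intro dvd_imp_le fact_fact_dvd_fact) auto
    then have "(fact j * fact m :: real) \<le> fact (j + m)"
      by (metis of_nat_fact of_nat_le_iff of_nat_mult)
    then have "exp (- c) * (c ^ (j + m) / fact (j + m)) \<le> exp (- c) * (c ^ (j + m) / (fact j * fact m))"
      using assms by (intro mult_left_mono divide_left_mono) auto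
    also have "\<dots> = exp (- c) * (c ^ m / fact m) * (c ^ j / fact j)"
      by (simp add: power_add field_simps)
    finally show ?thesis
      using poisson_damped_term_le[OF assms, of "j + m"] by linarith
  qed
  have "(\<Sum>j. poisson_damped_term c r (j + m)) \<le> (\<Sum>j. exp (- c) * (c ^ m / fact m) * (c ^ j / fact j))"
    using assms
    by (intro suminf_le term_le summable_ignore_initial_segment summable_poisson_damped_term
          summable_mult summable_exp_real)
  also have "\<dots> = exp (- c) * (c ^ m / fact m) * exp c"
    by (subst suminf_mult[OF summable_exp_real]) (simp add: sums_unique[OF exp_sums_real, symmetric])
  also have "\<dots> = c ^ m / fact m"
    by (simp add: exp_minus field_simps)
  finally show ?thesis .
qed

text \<open>For \<open>u < y\<close> the term \<open>r/u\<close> alone suffices; this is what the hypothesis on \<open>y\<close> is for.\<close>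

lemma two_sqrt_le_mult_ln_add_div:
  fixes u r y :: real
  assumes "u \<ge> 1" "y \<ge> 1" "r \<ge> 0" "2 * sqrt (r * ln y) \<le> r / y"
  shows "2 * sqrt (r * ln y) \<le> u * ln u + r / u"
proof (cases "u \<ge> y")
  case True
  have "0 \<le> (sqrt (u * ln y) - sqrt (r / u))\<^sup>2"
    by simp
  also have "\<dots> = u * ln y + r / u - 2 * sqrt (r * ln y)"
    using assms by (simp add: power2_eq_square algebra_simps real_sqrt_mult[symmetric])
  finally have "2 * sqrt (r * ln y) \<le> u * ln y + r / u"
    by simp
  moreover have "u * ln y \<le> u * ln u"
    using True assms by (intro mult_left_mono) auto
  ultimately show ?thesis
    by simp
next
  case False
  then have "r / y \<le> r / u"
    using assms by (intro divide_left_mono) auto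
  moreover have "0 \<le> u * ln u"
    using assms by simp
  ultimately show ?thesis
    using assms by linarith
qed

lemma ln_poisson_damped_term_le:
  fixes k :: nat
  assumes "c > 0"
  defines "u \<equiv> real k + 1"
  shows "ln (poisson_damped_term c r k) \<le> u * (2 + \<bar>ln c\<bar>) - (u * ln u + r / u)"
proof -
  have "ln (fact (Suc k) :: real) = ln u + ln (fact k)"
    unfolding u_def by (simp add: ln_mult add.commute)
  then have "u * ln u - u - ln u \<le> ln (fact k)"
    using ln_fact_ge[of "Suc k"] unfolding u_def by (simp add: add.commute)
  moreover have "ln u \<le> u"
    using ln_le_minus_one[of u] unfolding u_def by simp
  moreover have "real k * ln c \<le> u * \<bar>ln c\<bar>"
    unfolding u_def by (intro order.trans[OF mult_left_mono mult_right_mono]) auto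
  ultimately show ?thesis
    using assms(1) ln_poisson_damped_term[OF assms(1), of r k] unfolding u_def
    by (simp add: algebra_simps)
qed

lemma ln_suminf_poisson_damped_ge:
  assumes "c > 0" "x \<ge> 1" "r \<ge> 0"
  shows "- c - \<bar>ln c\<bar> * x - x * ln x - r / x \<le> ln (\<Sum>k. poisson_damped_term c r k)"
proof -
  define K where "K = nat \<lfloor>x\<rfloor>"
  have K: "real K \<le> x" "x < real K + 1" "1 \<le> real K"
    using assms(2) unfolding K_def by simp_all
  have "poisson_damped_term c r K \<le> (\<Sum>k. poisson_damped_term c r k)"
    using sum_le_suminf[OF summable_poisson_damped_term[OF assms(1,3)], of "{K}"]
      poisson_damped_term_pos[OF assms(1)] by (simp add: less_imp_le)
  then have "ln (poisson_damped_term c r K) \<le> ln (\<Sum>k. poisson_damped_term c r k)"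
    using poisson_damped_term_pos[OF assms(1)] suminf_poisson_damped_term_pos[OF assms(1,3)]
    by (subst ln_le_cancel_iff) auto
  moreover have "\<bar>real K * ln c\<bar> \<le> x * \<bar>ln c\<bar>"
    using K by (simp add: abs_mult mult_right_mono)
  then have "- \<bar>ln c\<bar> * x \<le> real K * ln c"
    by (simp add: abs_le_iff algebra_simps)
  moreover have "real K * ln (real K) \<le> x * ln x"
    using K by (intro mult_mono) auto
  then have "ln (fact K) \<le> x * ln x"
    using ln_fact_le[of K] by linarith
  moreover have "r / real (K + 1) \<le> r / x"
    using K assms by (intro divide_left_mono) auto
  ultimately show ?thesis
    using ln_poisson_damped_term[OF assms(1), of r K] by linarith
qed

lemma suminf_poisson_damped_le:
  assumes "c > 0" "x \<ge> 1" "y \<ge> 1" "r \<ge> 0" "2 * sqrt (r * ln y) \<le> r / y"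
  shows "(\<Sum>k. poisson_damped_term c r k)
    \<le> (x + 1) * exp ((x + 1) * (2 + \<bar>ln c\<bar>) - 2 * sqrt (r * ln y))
      + exp ((x + 1) * (1 + \<bar>ln c\<bar>) - x * ln x)"
proof -
  define m where "m = nat \<lceil>x\<rceil>"
  have m: "x \<le> real m" "real m < x + 1" "1 \<le> real m"
    using assms(2) unfolding m_def by linarith+
  define bound where "bound = exp ((x + 1) * (2 + \<bar>ln c\<bar>) - 2 * sqrt (r * ln y))"
  have head_term: "poisson_damped_term c r k \<le> bound" if "k < m" for k
  proof -
    have "ln (poisson_damped_term c r k)
        \<le> (real k + 1) * (2 + \<bar>ln c\<bar>) - ((real k + 1) * ln (real k + 1) + r / (real k + 1))"
      by (rule ln_poisson_damped_term_le[OF assms(1)])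
    also have "\<dots> \<le> (x + 1) * (2 + \<bar>ln c\<bar>) - 2 * sqrt (r * ln y)"
      using two_sqrt_le_mult_ln_add_div[of "real k + 1", OF _ assms(3-5)] that m
      by (intro diff_mono mult_right_mono) auto
    finally show ?thesis
      using poisson_damped_term_pos[OF assms(1)] unfolding bound_def
      by (metis exp_le_cancel_iff exp_ln)
  qed
  have "(\<Sum>k<m. poisson_damped_term c r k) \<le> real m * bound"
    using sum_mono[of "{..<m}", OF head_term] by simp
  also have "\<dots> \<le> (x + 1) * bound"
    using m unfolding bound_def by (intro mult_right_mono) auto
  finally have head: "(\<Sum>k<m. poisson_damped_term c r k) \<le> (x + 1) * bound" .
  have "x * ln x \<le> real m * ln (real m)"
    using m assms(2) by (intro mult_mono) auto
  moreover have "real m * (1 + \<bar>ln c\<bar>) \<le> (x + 1) * (1 + \<bar>ln c\<bar>)"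
    using m by (intro mult_right_mono) auto
  ultimately have "ln (c ^ m / fact m) \<le> (x + 1) * (1 + \<bar>ln c\<bar>) - x * ln x"
    using ln_power_div_fact_le[OF assms(1), of m] by linarith
  then have "c ^ m / fact m \<le> exp ((x + 1) * (1 + \<bar>ln c\<bar>) - x * ln x)"
    using assms(1) by (metis exp_le_cancel_iff exp_ln divide_pos_pos zero_less_power fact_gt_zero)
  then show ?thesis
    using suminf_split_initial_segment[OF summable_poisson_damped_term[OF assms(1,4)], of m]
      suminf_poisson_damped_tail_le[OF assms(1,4), of m] head
    unfolding bound_def by linarith
qed

lemma eventually_ln_suminf_poisson_damped_ge:
  assumes "c > 0"
  shows "eventually (\<lambda>r. - c - \<bar>ln c\<bar> * sqrt (2 * r / ln r)
      - sqrt (2 * r / ln r) * ln (sqrt (2 * r / ln r)) - r / sqrt (2 * r / ln r)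
    \<le> ln (\<Sum>k. poisson_damped_term c r k)) at_top"
proof -
  have "eventually (\<lambda>r::real. 1 \<le> sqrt (2 * r / ln r)) at_top"
    by real_asymp
  then show ?thesis
    using eventually_ge_at_top[of 0]
    by eventually_elim (use ln_suminf_poisson_damped_ge[OF assms] in blast)
qed

text \<open>The upper bound uses \<open>x = 4\<surd>(2r/ln r)\<close>, large enough for the Poisson tail to be
  dominated by the head.\<close>

lemma eventually_ln_suminf_poisson_damped_le:
  assumes "c > 0"
  shows "eventually (\<lambda>r. ln (\<Sum>k. poisson_damped_term c r k)
    \<le> ln 2 - 2 * sqrt (r * ln (sqrt r / ln r)) + ln (4 * sqrt (2 * r / ln r) + 1)
      + (4 * sqrt (2 * r / ln r) + 1) * (2 + \<bar>ln c\<bar>)) at_top"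
proof -
  have "eventually (\<lambda>r::real. 1 \<le> sqrt r / ln r) at_top"
    by real_asymp
  moreover have "eventually (\<lambda>r::real. 1 \<le> 4 * sqrt (2 * r / ln r)) at_top"
    by real_asymp
  moreover have "eventually (\<lambda>r::real. 2 * sqrt (r * ln (sqrt r / ln r)) \<le> r / (sqrt r / ln r)) at_top"
    by real_asymp
  moreover have "eventually (\<lambda>r::real. 2 * sqrt (r * ln (sqrt r / ln r)) - ln (4 * sqrt (2 * r / ln r) + 1)
      - (4 * sqrt (2 * r / ln r) + 1) \<le> 4 * sqrt (2 * r / ln r) * ln (4 * sqrt (2 * r / ln r))) at_top"
    by (real_asymp simp add: powr_half_sqrt real_sqrt_divide field_simps)
  moreover have "eventually (\<lambda>r::real. 0 \<le> r) at_top"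
    by (rule eventually_ge_at_top)
  ultimately show ?thesis
  proof eventually_elim
    case (elim r)
    define x where "x = 4 * sqrt (2 * r / ln r)"
    define y where "y = sqrt r / ln r"
    define A where "A = 2 * sqrt (r * ln y) - ln (x + 1) - (x + 1) * (2 + \<bar>ln c\<bar>)"
    have "0 < x + 1"
      using elim unfolding x_def by simp
    then have "(x + 1) * exp ((x + 1) * (2 + \<bar>ln c\<bar>) - 2 * sqrt (r * ln y))
        = exp (ln (x + 1) + ((x + 1) * (2 + \<bar>ln c\<bar>) - 2 * sqrt (r * ln y)))"
      by (simp add: exp_add)
    also have "\<dots> = exp (- A)"
      unfolding A_def by (simp add: algebra_simps)
    moreover have "exp ((x + 1) * (1 + \<bar>ln c\<bar>) - x * ln x) \<le> exp (- A)"
      using elim unfolding A_def x_def y_def by (simp add: algebra_simps)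
    ultimately have "(\<Sum>k. poisson_damped_term c r k) \<le> 2 * exp (- A)"
      using suminf_poisson_damped_le[OF assms, of x y r] elim unfolding x_def y_def by linarith
    then have "ln (\<Sum>k. poisson_damped_term c r k) \<le> ln (2 * exp (- A))"
      using suminf_poisson_damped_term_pos[OF assms] elim by (subst ln_le_cancel_iff) auto
    then show ?case
      unfolding A_def x_def y_def by (simp add: ln_mult)
  qed
qed

theorem lemma1:
  fixes c :: real
  assumes "c > 0"
  shows "(\<lambda>r::real. ln (\<Sum>k. c ^ k / fact k * exp (- c) * exp (- r / real (k + 1))))
           \<sim>[at_top] (\<lambda>r. - sqrt (2 * r * ln r))"
proof -
  have lower: "(\<lambda>r::real. - c - \<bar>ln c\<bar> * sqrt (2 * r / ln r)
      - sqrt (2 * r / ln r) * ln (sqrt (2 * r / ln r)) - r / sqrt (2 * r / ln r))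
    \<sim>[at_top] (\<lambda>r. - sqrt (2 * r * ln r))"
    by (rule asymp_equivI') (real_asymp simp add: powr_half_sqrt real_sqrt_divide field_simps)
  have upper: "(\<lambda>r::real. ln 2 - 2 * sqrt (r * ln (sqrt r / ln r)) + ln (4 * sqrt (2 * r / ln r) + 1)
      + (4 * sqrt (2 * r / ln r) + 1) * (2 + \<bar>ln c\<bar>))
    \<sim>[at_top] (\<lambda>r. - sqrt (2 * r * ln r))"
    by (rule asymp_equivI') (real_asymp simp add: powr_half_sqrt real_sqrt_divide field_simps)
  have "(\<lambda>r. ln (\<Sum>k. poisson_damped_term c r k)) \<sim>[at_top] (\<lambda>r. - sqrt (2 * r * ln r))"
    using eventually_ln_suminf_poisson_damped_ge[OF assms] eventually_ln_suminf_poisson_damped_le[OF assms]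
    by (intro asymp_equiv_sandwich_real[OF lower upper]) (auto elim: eventually_elim2)
  then show ?thesis
    by (simp add: poisson_damped_term_def)
qed

end
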